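(* Let $n\ge 2$ and let $\mathsf r=[r_1,\dots,r_{2n-2}]$ be a tree-like factorization of $\lambda_n$. For $j=1,\dots,2n-2$, the element $(r_1\cdots r_{j-1})\,r_j\,(r_{j-1}\cdots r_1)$ is a reflection of the form $(\!(0,m_j)\!)$, where $m_j$ is its value at $0$. Then $\mathsf r$ is cyclic if and only if $m_1<m_2<\dots<m_{2n-2}$.
   Context: The affine symmetric group $\widetilde S_n$ is the group, under composition $(vw)(k)=v(w(k))$, of bijections $w:\mathbb Z\to\mathbb Z$ with $w(i+n)=w(i)+n$ and $\sum_{i=1}^n w(i)=\binom{n+1}{2}$. For $i\not\equiv j\pmod n$, $(\!(i,j)\!)$ is the affine reflection interchanging $i+kn$ and $j+kn$ for all $k\in\mathbb Z$; $(\!(i,j)\!)=(\!(j,i)\!)=(\!(i+kn,j+kn)\!)$. For an integer $i$, "$i\bmod n$" denotes the representative of $i$ modulo $n$ in $\{1,\dots,n\}$. Let $\lambda_n$ be the element with $\lambda_n(k)=k+n$ for $k\not\equiv0\pmod n$ and $\lambda_n(k)=k-n(n-1)$ for $k\equiv 0\pmod n$; its reflection length is $2n-2$. $\textsc{fact}(\lambda_n)$ is the set of sequences $[r_1,\dots,r_{2n-2}]$ of reflections with $r_1\cdots r_{2n-2}=\lambda_n$. Such a sequence is tree-like if one can write $r_i=(\!(a_{i-1},b_i)\!)$ with integers $a_{i-1}<b_i$ ($1\le i\le 2n-2$) and $a_i\equiv b_i\pmod n$ ($1\le i\le 2n-3$). For a tree-like $\mathsf r$ so written and $k\in[n]$,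 let $N_{\mathsf r}(k)$ be the list, in increasing order of $i$, of the values $b_i\bmod n$ over all $i$ with $a_{i-1}\equiv k\pmod n$. A tree-like $\mathsf r$ is cyclic if (i) $N_{\mathsf r}(n)$ is strictly increasing, and (ii) for every $1\le k<n$, writing $N_{\mathsf r}(k)=[c_1,\dots,c_\ell]$, there exists $1\le j\le \ell$ with $c_j<c_{j+1}<\dots<c_{\ell-1}<k<c_1<\dots<c_{j-1}$ (note $c_\ell$ does not appear; it is replaced by $k$). *)

theory Defs
  imports Main
begin

definition affine_sym :: "nat \<Rightarrow> (int \<Rightarrow> int) set" where
  "affine_sym n = {w. bij w \<and> (\<forall>i. w (i + int n) = w i + int n)
                     \<and> (\<Sum>i=1..int n. w i) = int n * (int n + 1) div 2}"

text \<open>The affine reflection ((i,j)): interchanges i+kn and j+kn for all k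
  (meaningful when i and j are not congruent mod n).\<close>
definition aff_refl :: "nat \<Rightarrow> int \<Rightarrow> int \<Rightarrow> int \<Rightarrow> int" where
  "aff_refl n i j = (\<lambda>k. if k mod int n = i mod int n then k - i + j
                         else if k mod int n = j mod int n then k - j + i else k)"

definition reflections :: "nat \<Rightarrow> (int \<Rightarrow> int) set" where
  "reflections n = {aff_refl n i j | i j. i mod int n \<noteq> j mod int n}"

definition modn :: "nat \<Rightarrow> int \<Rightarrow> int" where
  "modn n i = (if i mod int n = 0 then int n else i mod int n)"

definition lambda_n :: "nat \<Rightarrow> int \<Rightarrow> int" where
  "lambda_n n = (\<lambda>k. if k mod int n = 0 then k - int n * (int n - 1) else k + int n)"

text \<open>Product r_1 r_2 ... r_m of a list of permutations (composition, (vw)(k) = v(w(k))).\<close>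
definition lprod :: "(int \<Rightarrow> int) list \<Rightarrow> int \<Rightarrow> int" where
  "lprod rs = foldr (\<circ>) rs id"

definition fact_lambda :: "nat \<Rightarrow> (int \<Rightarrow> int) list set" where
  "fact_lambda n = {rs. length rs = 2 * n - 2 \<and> set rs \<subseteq> reflections n
                        \<and> lprod rs = lambda_n n}"

text \<open>r_i = rs ! (i-1). A tree-like writing: r_i = ((a_{i-1}, b_i)) with a_{i-1} < b_i
  for 1 <= i <= 2n-2, and a_i = b_i mod n for 1 <= i <= 2n-3.\<close>
definition tree_like_repr :: "nat \<Rightarrow> (int \<Rightarrow> int) list \<Rightarrow> (nat \<Rightarrow> int) \<Rightarrow> (nat \<Rightarrow> int) \<Rightarrow> bool" where
  "tree_like_repr n rs a b \<longleftrightarrow>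
     (\<forall>i\<in>{1..2*n-2}. a (i - 1) mod int n \<noteq> b i mod int n \<and>
                      rs ! (i - 1) = aff_refl n (a (i - 1)) (b i) \<and> a (i - 1) < b i) \<and>
     (\<forall>i\<in>{1..2*n-3}. a i mod int n = b i mod int n)"

definition tree_like :: "nat \<Rightarrow> (int \<Rightarrow> int) list \<Rightarrow> bool" where
  "tree_like n rs \<longleftrightarrow> (\<exists>a b. tree_like_repr n rs a b)"

text \<open>N_r(k): values b_i mod n, in increasing order of i, over i with a_{i-1} = k mod n.\<close>
definition Nlist :: "nat \<Rightarrow> (nat \<Rightarrow> int) \<Rightarrow> (nat \<Rightarrow> int) \<Rightarrow> int \<Rightarrow> int list" where
  "Nlist n a b k = map (\<lambda>i. modn n (b i))
      (filter (\<lambda>i. a (i - 1) mod int n = k mod int n) [1..<2*n-1])"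

text \<open>Condition (ii) for a list cs = [c_1,...,c_l]: some 1 <= j <= l with
  c_j < ... < c_{l-1} < k < c_1 < ... < c_{j-1}  (0-indexed: j0 = j-1).\<close>
definition cyc_cond :: "int list \<Rightarrow> int \<Rightarrow> bool" where
  "cyc_cond cs k \<longleftrightarrow> (\<exists>j0 < length cs.
       sorted_wrt (<) (drop j0 (butlast cs) @ [k] @ take j0 cs))"

definition cyclic :: "nat \<Rightarrow> (int \<Rightarrow> int) list \<Rightarrow> bool" where
  "cyclic n rs \<longleftrightarrow> (\<exists>a b. tree_like_repr n rs a b \<and>
       sorted_wrt (<) (Nlist n a b (int n)) \<and>
       (\<forall>k. 1 \<le> k \<and> k < int n \<longrightarrow> cyc_cond (Nlist n a b k) k))"

definition conj_refl :: "(int \<Rightarrow> int) list \<Rightarrow> nat \<Rightarrow> int \<Rightarrow> int" where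
  "conj_refl rs j = lprod (take (j - 1) rs) \<circ> rs ! (j - 1) \<circ> lprod (rev (take (j - 1) rs))"

end

(*
  Write r_i = ((c_{i-1}, c_i)) with c_0 < c_1 < ... < c_{2n-2}. Since lambda_n sends c_{2n-2}
  to c_0, both ends lie in the class of 0, and the factorization is a closed walk on the residue
  classes mod n. Follow a point x not divisible by n through r_{2n-2}, ..., r_1: the reflection
  r_i moves it, by c_i - c_{i-1}, exactly when it currently lies in the class of c_{i-1}. The
  moves of x add up to n (as lambda_n x = x + n) and no single step is a multiple of n, so every
  nonzero class is moved at least twice, hence, there being only 2n-2 steps, exactly twice: at
  the step where the walk first enters it and at the step where it finally leaves it. The walk is
  therefore a depth-first traversal of a tree on the classes.

  Conjugating, r_1 ... r_{j-1} r_j r_{j-1} ... r_1 = ((c_0, c_0 + m_j)) where c_0 + m_j is c_j,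
  increased by n - (c_j - c_{j-1}) when step j is the exit from a class. Hence m_1 < m_2 < ...
  iff c_{j+1} - c_{j-1} > n whenever an exit step j is followed by an entry step j+1. By
  induction along the walk this is equivalent to the steps leaving each class, apart from its
  final exit, having increasing lengths, which is the cyclicity condition once the residues
  c_i mod n are read in the cyclic order that starts just after the class left.
*)
theory Submission
  imports Defs
begin

section \<open>Affine reflections and periodic bijections\<close>

lemma mod_diff_add_eq:
  fixes x p q N :: int
  assumes "x mod N = p mod N"
  shows "(x - p + q) mod N = q mod N"
proof -
  have "(x - p + q) mod N = (p - p + q) mod N"
    using assms by (intro mod_add_cong mod_diff_cong) simp_all
  then show ?thesis by simp
qed

lemma aff_refl_add_period: "aff_refl n p q (x + int n) = aff_refl n p q x + int n"
  unfolding aff_refl_def by simp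

lemma aff_refl_left: "aff_refl n p q p = q"
  unfolding aff_refl_def by simp

lemma aff_refl_right: "p mod int n \<noteq> q mod int n \<Longrightarrow> aff_refl n p q q = p"
  unfolding aff_refl_def by auto

lemma aff_refl_involutive:
  assumes "p mod int n \<noteq> q mod int n"
  shows "aff_refl n p q \<circ> aff_refl n p q = id"
proof
  fix x
  have "q mod int n \<noteq> p mod int n" using assms by simp
  then show "(aff_refl n p q \<circ> aff_refl n p q) x = id x"
    using mod_diff_add_eq[of x "int n" p q] mod_diff_add_eq[of x "int n" q p] assms
    unfolding aff_refl_def by auto
qed

lemma aff_refl_translate:
  assumes "p' mod int n = p mod int n" and "q' - p' = q - p"
  shows "aff_refl n p' q' = aff_refl n p q"
proof -
  have "q' = p' - p + q" using assms(2) by simp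
  then have "q' mod int n = q mod int n" using mod_diff_add_eq[OF assms(1)] by simp
  then show ?thesis using assms unfolding aff_refl_def by (auto simp: fun_eq_iff)
qed

definition periodic :: "nat \<Rightarrow> (int \<Rightarrow> int) \<Rightarrow> bool" where
  "periodic n F \<longleftrightarrow> (\<forall>x. F (x + int n) = F x + int n)"

lemma periodic_aff_refl: "periodic n (aff_refl n p q)"
  unfolding periodic_def by (simp add: aff_refl_add_period)

lemma periodic_id: "periodic n id"
  unfolding periodic_def by simp

lemma periodic_comp: "periodic n F \<Longrightarrow> periodic n G \<Longrightarrow> periodic n (F \<circ> G)"
  unfolding periodic_def by simp

lemma periodic_add_mult:
  assumes "periodic n F"
  shows "F (x + t * int n) = F x + t * int n"
proof (induction t rule: int_induct[of _ 0])
  case (step1 t)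
  have "F ((x + t * int n) + int n) = F (x + t * int n) + int n"
    using assms unfolding periodic_def by blast
  then show ?case using step1.IH by (simp add: algebra_simps)
next
  case (step2 t)
  have "F ((x + (t - 1) * int n) + int n) = F (x + (t - 1) * int n) + int n"
    using assms unfolding periodic_def by blast
  then show ?case using step2.IH by (simp add: algebra_simps)
qed simp

lemma periodic_eq_add_diff:
  assumes "periodic n F" and "x mod int n = p mod int n"
  shows "F x = F p + (x - p)"
proof -
  obtain t where "x = p + t * int n"
    using assms(2) by (metis mod_eqE add.commute diff_add_cancel mult.commute)
  then show ?thesis using periodic_add_mult[OF assms(1)] by simp
qed

lemma periodic_mod_cong:
  assumes "periodic n F" and "x mod int n = y mod int n"
  shows "F x mod int n = F y mod int n"
  using periodic_eq_add_diff[OF assms] assms(2) by (metis mod_diff_add_eq add.commute diff_add_cancel)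

lemma periodic_inj_mod_iff:
  assumes "periodic n F" and "inj F"
  shows "F x mod int n = F y mod int n \<longleftrightarrow> x mod int n = y mod int n"
proof
  assume "F x mod int n = F y mod int n"
  then obtain t where "F x = F y + t * int n"
    by (metis mod_eqE add.commute diff_add_cancel mult.commute)
  then have "F x = F (y + t * int n)" using periodic_add_mult[OF assms(1)] by simp
  then have "x = y + t * int n" using assms(2) by (simp add: inj_eq)
  then show "x mod int n = y mod int n" by simp
qed (rule periodic_mod_cong[OF assms(1)])

lemma periodic_conj_aff_refl:
  assumes "periodic n W" and "W \<circ> V = id" and "V \<circ> W = id"
    and "p mod int n \<noteq> q mod int n"
  shows "W \<circ> aff_refl n p q \<circ> V = aff_refl n (W p) (W q)"
proof -
  have "inj W" using assms(3) by (metis inj_on_id inj_on_imageI2)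
  note mod_iff = periodic_inj_mod_iff[OF assms(1) this]
  have shift: "W (x - y + z) = W x - W y + W z" if "x mod int n = y mod int n" for x y z
    using periodic_eq_add_diff[OF assms(1) that]
      periodic_eq_add_diff[OF assms(1) mod_diff_add_eq[OF that, of z]] by simp
  have "W (aff_refl n p q x) = aff_refl n (W p) (W q) (W x)" for x
    using assms(4) shift[of x p q] shift[of x q p] unfolding aff_refl_def mod_iff by auto
  then show ?thesis using assms(2) by (auto simp: fun_eq_iff pointfree_idE)
qed

lemma lprod_Nil [simp]: "lprod [] = id"
  unfolding lprod_def by simp

lemma lprod_Cons [simp]: "lprod (f # fs) = f \<circ> lprod fs"
  unfolding lprod_def by simp

lemma lprod_append: "lprod (fs @ gs) = lprod fs \<circ> lprod gs"
  by (induction fs) (auto simp: comp_assoc)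

lemma periodic_lprod: "(\<And>f. f \<in> set fs \<Longrightarrow> periodic n f) \<Longrightarrow> periodic n (lprod fs)"
  by (induction fs) (auto intro: periodic_comp periodic_id)

lemma lprod_comp_lprod_rev:
  assumes "\<And>f. f \<in> set fs \<Longrightarrow> f \<circ> f = id"
  shows "lprod fs \<circ> lprod (rev fs) = id"
  using assms
proof (induction fs)
  case (Cons f fs)
  have "lprod (f # fs) \<circ> lprod (rev (f # fs)) = f \<circ> (lprod fs \<circ> lprod (rev fs)) \<circ> f"
    by (simp add: lprod_append comp_assoc)
  also have "\<dots> = f \<circ> f" using Cons by (metis comp_id list.set_intros(2))
  also have "\<dots> = id" using Cons.prems by (meson list.set_intros(1))
  finally show ?case .
qed simp

lemma lprod_rev_comp_lprod:
  assumes "\<And>f. f \<in> set fs \<Longrightarrow> f \<circ> f = id"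
  shows "lprod (rev fs) \<circ> lprod fs = id"
  using lprod_comp_lprod_rev[of "rev fs"] assms by simp

lemma bij_lprod:
  assumes "\<And>f. f \<in> set fs \<Longrightarrow> f \<circ> f = id"
  shows "bij (lprod fs)"
  using lprod_comp_lprod_rev[OF assms] lprod_rev_comp_lprod[OF assms] o_bij by blast

section \<open>Cyclic order and cyclic writings\<close>

lemma sorted_wrt_cong:
  assumes "\<And>x y. x \<in> set xs \<Longrightarrow> y \<in> set xs \<Longrightarrow> P x y \<longleftrightarrow> Q x y"
  shows "sorted_wrt P xs \<longleftrightarrow> sorted_wrt Q xs"
  using sorted_wrt_mono_rel[of xs P Q] sorted_wrt_mono_rel[of xs Q P] assms by blast

lemma sorted_wrt_filter_upt_iff:
  "sorted_wrt R (filter P [m..<n]) \<longleftrightarrow>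
     (\<forall>p q. m \<le> p \<longrightarrow> p < q \<longrightarrow> q < n \<longrightarrow> P p \<longrightarrow> P q \<longrightarrow> R p q)"
  by (induction n) (auto simp: sorted_wrt_append less_Suc_eq)

text \<open>x comes before y in the cyclic order that starts just after k.\<close>

definition cyclic_less :: "'a::linorder \<Rightarrow> 'a \<Rightarrow> 'a \<Rightarrow> bool" where
  "cyclic_less k x y \<longleftrightarrow> (if k < x then k < y \<longrightarrow> x < y else y < k \<and> x < y)"

lemma sorted_wrt_less_around:
  fixes k :: "'a::linorder"
  shows "sorted_wrt (<) (ds @ [k] @ ts) \<longleftrightarrow>
     sorted_wrt (<) ds \<and> sorted_wrt (<) ts \<and> (\<forall>x\<in>set ds. x < k) \<and> (\<forall>y\<in>set ts. k < y)"
  by (auto simp: sorted_wrt_append intro: less_trans)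

lemma sorted_cyclic_less_dropWhile_less:
  fixes k :: "'a::linorder"
  assumes "sorted_wrt (cyclic_less k) xs" and "k \<notin> set xs"
  shows "\<forall>x\<in>set (dropWhile ((<) k) xs). x < k"
proof (cases "dropWhile ((<) k) xs")
  case (Cons h t)
  have "\<not> k < h" using hd_dropWhile[of "(<) k" xs] Cons by simp
  moreover have "h \<noteq> k" using assms(2) Cons set_dropWhileD[of h "(<) k" xs] by auto
  ultimately have "h < k" by simp
  moreover have "sorted_wrt (cyclic_less k) (h # t)"
    using sorted_wrt_dropWhile[OF assms(1)] Cons by metis
  ultimately show ?thesis using Cons by (auto simp: cyclic_less_def)
qed (simp only: list.set empty_iff ball_empty)

lemma sorted_rotation_iff_sorted_cyclic_less:
  fixes k :: "'a::linorder"
  assumes "k \<notin> set xs"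
  shows "(\<exists>j \<le> length xs. sorted_wrt (<) (drop j xs @ [k] @ take j xs)) \<longleftrightarrow>
     sorted_wrt (cyclic_less k) xs"
proof
  assume "\<exists>j \<le> length xs. sorted_wrt (<) (drop j xs @ [k] @ take j xs)"
  then obtain j where "sorted_wrt (<) (drop j xs @ [k] @ take j xs)" by blast
  then have "sorted_wrt (cyclic_less k) (take j xs @ drop j xs)"
    unfolding sorted_wrt_less_around sorted_wrt_append
    by (auto simp: cyclic_less_def elim!: sorted_wrt_mono_rel[rotated])
  then show "sorted_wrt (cyclic_less k) xs" by simp
next
  assume sorted: "sorted_wrt (cyclic_less k) xs"
  let ?ts = "takeWhile ((<) k) xs" and ?ds = "dropWhile ((<) k) xs"
  have ts_above: "\<forall>y\<in>set ?ts. k < y" by (auto dest: set_takeWhileD)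
  have "sorted_wrt (<) ?ts"
    using sorted_wrt_takeWhile[OF sorted] by (rule sorted_wrt_mono_rel[rotated])
      (use ts_above in \<open>auto simp: cyclic_less_def\<close>)
  have ds_below: "\<forall>x\<in>set ?ds. x < k"
    using sorted_cyclic_less_dropWhile_less[OF sorted assms] .
  have "sorted_wrt (<) ?ds"
    using sorted_wrt_dropWhile[OF sorted] by (rule sorted_wrt_mono_rel[rotated])
      (use ds_below in \<open>auto simp: cyclic_less_def\<close>)
  then have "sorted_wrt (<) (drop (length ?ts) xs @ [k] @ take (length ?ts) xs)"
    unfolding takeWhile_eq_take[symmetric] dropWhile_eq_drop[symmetric] sorted_wrt_less_around
    using ts_above ds_below \<open>sorted_wrt (<) ?ts\<close> by blast
  then show "\<exists>j \<le> length xs. sorted_wrt (<) (drop j xs @ [k] @ take j xs)"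
    using length_takeWhile_le by blast
qed

lemma cyc_cond_iff_sorted_cyclic_less:
  assumes "cs \<noteq> []" and "k \<notin> set (butlast cs)"
  shows "cyc_cond cs k \<longleftrightarrow> sorted_wrt (cyclic_less k) (butlast cs)"
proof -
  have "take j cs = take j (butlast cs)" if "j \<le> length (butlast cs)" for j
  proof -
    have "j < length cs" using that assms(1) by (simp add: less_eq_iff_succ_less)
    then show ?thesis by (simp add: take_butlast)
  qed
  moreover have "j < length cs \<longleftrightarrow> j \<le> length (butlast cs)" for j
    using assms(1) by (cases cs rule: rev_cases) auto
  ultimately show ?thesis
    unfolding cyc_cond_def sorted_rotation_iff_sorted_cyclic_less[OF assms(2), symmetric]
    by (metis (no_types, lifting))
qed

lemma mod_diff_less_iff_cyclic_less:
  fixes k x y M :: int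
  assumes "1 \<le> k" "k < M" and "1 \<le> x" "x \<le> M" "x \<noteq> k" and "1 \<le> y" "y \<le> M" "y \<noteq> k"
  shows "(x - k) mod M < (y - k) mod M \<longleftrightarrow> cyclic_less k x y"
proof -
  have "(z - k) mod M = (if k < z then z - k else z - k + M)" if "1 \<le> z" "z \<le> M" "z \<noteq> k" for z
  proof (cases "k < z")
    case False
    have "(z - k) mod M = (z - k + M) mod M" by simp
    also have "\<dots> = z - k + M" using False that assms(1,2) by (intro mod_pos_pos_trivial) auto
    finally show ?thesis using False by simp
  qed (use that assms in \<open>simp add: mod_pos_pos_trivial\<close>)
  then show ?thesis using assms unfolding cyclic_less_def by auto
qed

definition cyclic_repr :: "nat \<Rightarrow> (nat \<Rightarrow> int) \<Rightarrow> (nat \<Rightarrow> int) \<Rightarrow> bool" where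
  "cyclic_repr n a b \<longleftrightarrow> sorted_wrt (<) (Nlist n a b (int n)) \<and>
     (\<forall>k. 1 \<le> k \<and> k < int n \<longrightarrow> cyc_cond (Nlist n a b k) k)"

lemma cyclic_iff_cyclic_repr: "cyclic n rs \<longleftrightarrow> (\<exists>a b. tree_like_repr n rs a b \<and> cyclic_repr n a b)"
  unfolding cyclic_def cyclic_repr_def ..

lemma modn_cong: "x mod int n = y mod int n \<Longrightarrow> modn n x = modn n y"
  unfolding modn_def by simp

lemma modn_mod: "modn n x mod int n = x mod int n"
  unfolding modn_def by auto

lemma modn_range:
  assumes "n > 0"
  shows "modn n x \<in> {1..int n}"
proof -
  have "0 \<le> x mod int n" and "x mod int n < int n" using assms by simp_all
  then show ?thesis unfolding modn_def by auto
qed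

section \<open>The walk of a tree-like factorization\<close>

lemma eq_of_sum_eq_card_mult:
  fixes f :: "'a \<Rightarrow> nat"
  assumes "finite A" and "\<forall>x\<in>A. k \<le> f x" and "sum f A = k * card A" and "x \<in> A"
  shows "f x = k"
proof (rule ccontr)
  assume "f x \<noteq> k"
  then have "sum (\<lambda>_. k) A < sum f A"
    using assms by (intro sum_strict_mono_ex1) force+
  then show False using assms(3) by simp
qed

text \<open>Translating each pair (a (i - 1), b i) by a multiple of n so that it starts at c (i - 1),
  where the previous pair ended, gives r_i = ((c (i - 1), c i)) with c increasing.\<close>

fun chain :: "(nat \<Rightarrow> int) \<Rightarrow> (nat \<Rightarrow> int) \<Rightarrow> nat \<Rightarrow> int" where
  "chain a b 0 = a 0"
| "chain a b (Suc i) = chain a b i + (b (Suc i) - a i)"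

locale tree_like_factorization =
  fixes n :: nat and rs :: "(int \<Rightarrow> int) list" and a b :: "nat \<Rightarrow> int"
  assumes n_ge_2: "n \<ge> 2"
    and length_rs: "length rs = 2 * n - 2"
    and lprod_rs: "lprod rs = lambda_n n"
    and repr: "tree_like_repr n rs a b"
begin

abbreviation N :: int where "N \<equiv> int n"
abbreviation L :: nat where "L \<equiv> 2 * n - 2"
abbreviation c :: "nat \<Rightarrow> int" where "c \<equiv> chain a b"

definition step :: "nat \<Rightarrow> int" where
  "step i = c i - c (i - 1)"

definition prefix :: "nat \<Rightarrow> int \<Rightarrow> int" where
  "prefix i = lprod (take i rs)"

definition suffix :: "nat \<Rightarrow> int \<Rightarrow> int" where
  "suffix i = lprod (drop i rs)"

lemma N_pos: "N > 0"
  using n_ge_2 by simp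

lemma mod_N_mem_classes:
  assumes "x mod N \<noteq> 0"
  shows "x mod N \<in> {1..N - 1}"
proof -
  have "0 \<le> x mod N" and "x mod N < N" using N_pos by simp_all
  then show ?thesis using assms by simp
qed

lemma chain_mod_a: "i < L \<Longrightarrow> c i mod N = a i mod N"
proof (induction i)
  case (Suc i)
  have "c (Suc i) mod N = b (Suc i) mod N"
    using Suc mod_diff_add_eq[of "c i" N "a i" "b (Suc i)"] by (simp add: algebra_simps)
  also have "\<dots> = a (Suc i) mod N"
    using repr Suc.prems unfolding tree_like_repr_def by (auto simp: numeral_eq_Suc)
  finally show ?case .
qed simp

lemma chain_mod_b:
  assumes "i \<in> {1..L}"
  shows "c i mod N = b i mod N"
proof -
  obtain j where j: "i = Suc j" using assms by (cases i) auto
  then have ci: "c i = c j - a j + b i" by simp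
  show ?thesis unfolding ci by (rule mod_diff_add_eq[OF chain_mod_a]) (use assms j in simp)
qed

lemma
  assumes "i \<in> {1..L}"
  shows nth_rs_chain: "rs ! (i - 1) = aff_refl n (c (i - 1)) (c i)"
    and chain_less: "c (i - 1) < c i"
    and chain_mod_neq: "c (i - 1) mod N \<noteq> c i mod N"
proof -
  obtain j where j: "i = Suc j" using assms by (cases i) auto
  have r: "a j mod N \<noteq> b i mod N" "rs ! j = aff_refl n (a j) (b i)" "a j < b i"
    using repr assms unfolding tree_like_repr_def j by (auto dest!: bspec[of _ _ "Suc j"])
  have ci: "c i = c j + (b i - a j)" using j by simp
  have cj: "c j mod N = a j mod N" using chain_mod_a assms j by simp
  have "c i mod N = b i mod N" using chain_mod_b assms by simp
  then show "c (i - 1) mod N \<noteq> c i mod N" using cj r(1) j by simp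
  show "c (i - 1) < c i" using ci r(3) j by simp
  show "rs ! (i - 1) = aff_refl n (c (i - 1)) (c i)"
    using r(2) aff_refl_translate[OF cj, of "c i" "b i"] ci j by simp
qed

lemma step_pos: "i \<in> {1..L} \<Longrightarrow> step i \<ge> 1"
  using chain_less unfolding step_def by fastforce

lemma chain_strict_mono: "i < j \<Longrightarrow> j \<le> L \<Longrightarrow> c i < c j"
proof (induction j)
  case (Suc j)
  then show ?case using chain_less[of "Suc j"] by (cases "i = j") auto
qed simp

lemma
  assumes "f \<in> set rs"
  shows involutive_rs: "f \<circ> f = id" and periodic_rs: "periodic n f"
proof -
  obtain i where "i < L" "f = rs ! i" using assms length_rs by (metis in_set_conv_nth)
  then have "f = aff_refl n (c i) (c (Suc i))" "c i mod N \<noteq> c (Suc i) mod N"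
    using nth_rs_chain[of "Suc i"] chain_mod_neq[of "Suc i"] by auto
  then show "f \<circ> f = id" "periodic n f" using aff_refl_involutive periodic_aff_refl by auto
qed

lemma periodic_prefix: "periodic n (prefix i)"
  unfolding prefix_def by (rule periodic_lprod) (meson in_set_takeD periodic_rs)

lemma periodic_suffix: "periodic n (suffix i)"
  unfolding suffix_def by (rule periodic_lprod) (meson in_set_dropD periodic_rs)

lemma bij_suffix: "bij (suffix i)"
  unfolding suffix_def by (rule bij_lprod) (meson in_set_dropD involutive_rs)

lemma inj_prefix: "inj (prefix i)"
  unfolding prefix_def using bij_lprod bij_is_inj in_set_takeD involutive_rs by metis

lemma inj_suffix: "inj (suffix i)"
  using bij_suffix bij_is_inj by blast

lemma lambda_eq_prefix_suffix: "lambda_n n = prefix i \<circ> suffix i"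
  unfolding prefix_def suffix_def using lprod_rs lprod_append by (metis append_take_drop_id)

lemma prefix_step: "i \<in> {1..L} \<Longrightarrow> prefix i = prefix (i - 1) \<circ> rs ! (i - 1)"
  unfolding prefix_def using length_rs
  by (cases i) (auto simp: take_Suc_conv_app_nth lprod_append)

lemma suffix_step: "i \<in> {1..L} \<Longrightarrow> suffix (i - 1) = rs ! (i - 1) \<circ> suffix i"
  unfolding suffix_def using length_rs by (cases i) (auto simp: Cons_nth_drop_Suc[symmetric])

lemma suffix_L: "suffix L = id"
  unfolding suffix_def using length_rs by simp

lemma prefix_chain: "i \<le> L \<Longrightarrow> prefix i (c i) = c 0"
proof (induction i)
  case (Suc i)
  have "prefix (Suc i) (c (Suc i)) = prefix i (aff_refl n (c i) (c (Suc i)) (c (Suc i)))"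
    using prefix_step[of "Suc i"] nth_rs_chain[of "Suc i"] Suc.prems by simp
  also have "\<dots> = prefix i (c i)" using aff_refl_right chain_mod_neq[of "Suc i"] Suc.prems by simp
  finally show ?case using Suc by simp
qed (simp add: prefix_def)

lemma suffix_chain_L: "i \<le> L \<Longrightarrow> suffix i (c L) = c i"
proof (induction i rule: inc_induct)
  case (step i)
  have "suffix i (c L) = aff_refl n (c i) (c (Suc i)) (suffix (Suc i) (c L))"
    using suffix_step[of "Suc i"] nth_rs_chain[of "Suc i"] step.hyps by simp
  then show ?case using step aff_refl_right chain_mod_neq[of "Suc i"] by simp
qed (simp add: suffix_L)

lemma chain_L_mod: "c L mod N = 0" and chain_0: "c 0 = c L - N * (N - 1)"
proof -
  have lam: "lambda_n n (c L) = c 0"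
    using prefix_chain[of L] suffix_chain_L[of 0] lambda_eq_prefix_suffix[of L] suffix_L by simp
  moreover have "c 0 < c L" using chain_strict_mono[of 0 L] n_ge_2 by simp
  ultimately show "c L mod N = 0" unfolding lambda_n_def by (auto split: if_splits)
  with lam show "c 0 = c L - N * (N - 1)" unfolding lambda_n_def by simp
qed

lemma chain_0_mod: "c 0 mod N = 0"
proof -
  have "c 0 = c L + (1 - N) * N" using chain_0 by (simp add: algebra_simps)
  then show ?thesis using chain_L_mod by (metis mod_mult_self1)
qed

text \<open>r_{2n-2}, ..., r_{i+1} carry x to suffix i x, which r_i then moves iff i \<in> moves x
  (for x not divisible by n).\<close>

definition moves :: "int \<Rightarrow> nat set" where
  "moves x = {i \<in> {1..L}. suffix i x mod N = c (i - 1) mod N}"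

lemma finite_moves: "finite (moves x)"
  unfolding moves_def by simp

lemma moves_subset: "moves x \<subseteq> {1..L}"
  unfolding moves_def by auto

lemma suffix_mod_eq_chain_iff:
  assumes "i \<le> L"
  shows "suffix i x mod N = c i mod N \<longleftrightarrow> x mod N = 0"
  using periodic_inj_mod_iff[OF periodic_suffix inj_suffix, of i x "c L"]
  by (simp add: suffix_chain_L[OF assms] chain_L_mod)

lemma suffix_pred:
  assumes "i \<in> {1..L}" and "x mod N \<noteq> 0"
  shows "suffix (i - 1) x = suffix i x + (if i \<in> moves x then step i else 0)"
proof -
  have "suffix (i - 1) x = aff_refl n (c (i - 1)) (c i) (suffix i x)"
    using suffix_step[OF assms(1)] nth_rs_chain[OF assms(1)] by simp
  moreover have "suffix i x mod N \<noteq> c i mod N"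
    using suffix_mod_eq_chain_iff[of i x] assms by auto
  ultimately show ?thesis
    using assms unfolding moves_def aff_refl_def step_def by auto
qed

lemma suffix_eq_add_sum_step:
  assumes "x mod N \<noteq> 0" and "i \<le> L"
  shows "suffix i x = x + (\<Sum>j\<in>{j \<in> moves x. i < j}. step j)"
  using assms(2)
proof (induction i rule: inc_induct)
  case base
  have "{j \<in> moves x. L < j} = {}" using moves_subset by fastforce
  then show ?case unfolding \<open>{j \<in> moves x. L < j} = {}\<close> by (simp add: suffix_L)
next
  case (step i)
  have "{j \<in> moves x. i < j} =
      (if Suc i \<in> moves x then insert (Suc i) else id) {j \<in> moves x. Suc i < j}"
    by (auto intro: Suc_lessI)
  then show ?case
    using suffix_pred[of "Suc i" x] step assms(1) finite_moves by (simp add: sum.insert_if)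
qed

lemma prefix_suffix:
  assumes "x mod N \<noteq> 0"
  shows "prefix i (suffix i x) = x + N"
proof -
  have "prefix i (suffix i x) = lambda_n n x" using lambda_eq_prefix_suffix[of i] by simp
  then show ?thesis using assms unfolding lambda_n_def by simp
qed

lemma sum_step_moves:
  assumes "x mod N \<noteq> 0"
  shows "(\<Sum>j\<in>moves x. step j) = N"
proof -
  have "{j \<in> moves x. 0 < j} = moves x" using moves_subset by fastforce
  then have "suffix 0 x = x + (\<Sum>j\<in>moves x. step j)"
    using suffix_eq_add_sum_step[OF assms, of 0] by simp
  moreover have "suffix 0 x = x + N"
    using prefix_suffix[OF assms, of 0] by (simp add: prefix_def)
  ultimately show ?thesis by simp
qed

lemma moves_mod_cong: "x mod N = y mod N \<Longrightarrow> moves x = moves y"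
  unfolding moves_def using periodic_mod_cong[OF periodic_suffix] by metis

lemma moves_disjoint:
  assumes "x mod N \<noteq> y mod N"
  shows "moves x \<inter> moves y = {}"
proof (intro equals0I)
  fix i assume "i \<in> moves x \<inter> moves y"
  then have "suffix i x mod N = suffix i y mod N" unfolding moves_def by simp
  then show False
    using periodic_inj_mod_iff[OF periodic_suffix inj_suffix] assms by blast
qed

lemma moved_class_unique:
  assumes "u \<in> {1..N - 1}" and "v \<in> {1..N - 1}" and "j \<in> moves u" and "j \<in> moves v"
  shows "u = v"
  using moves_disjoint[of u v] assms by (cases "u = v") auto

lemma moves_cover:
  assumes "i \<in> {1..L}"
  shows "\<exists>u\<in>{1..N - 1}. i \<in> moves u"
proof -
  obtain y where y: "suffix i y = c (i - 1)" using bij_suffix by (metis bij_pointE)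
  then have "y mod N \<noteq> 0"
    using suffix_mod_eq_chain_iff[of i y] chain_mod_neq[of i] assms by auto
  then have "y mod N \<in> {1..N - 1}" by (rule mod_N_mem_classes)
  moreover have "i \<in> moves (y mod N)"
    using moves_mod_cong[of "y mod N" y] y assms unfolding moves_def by auto
  ultimately show ?thesis by blast
qed

lemma card_moves_ge_2:
  assumes "x mod N \<noteq> 0"
  shows "card (moves x) \<ge> 2"
proof -
  have "moves x \<noteq> {}" using sum_step_moves[OF assms] N_pos by auto
  moreover have "moves x \<noteq> {i}" for i
  proof
    assume "moves x = {i}"
    then have "i \<in> {1..L}" and "c i = c (i - 1) + N"
      using moves_subset[of x] sum_step_moves[OF assms] unfolding step_def by auto
    then show False using chain_mod_neq[of i] by simp
  qed
  ultimately have "card (moves x) \<noteq> 0" and "card (moves x) \<noteq> 1"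
    using finite_moves[of x] by (auto simp: card_1_singleton_iff)
  then show ?thesis by linarith
qed

lemma card_moves:
  assumes "u \<in> {1..N - 1}"
  shows "card (moves u) = 2"
proof -
  have "(\<Sum>v\<in>{1..N - 1}. card (moves v)) = card (\<Union>v\<in>{1..N - 1}. moves v)"
    using moves_disjoint finite_moves by (intro card_UN_disjoint[symmetric]) auto
  also have "(\<Union>v\<in>{1..N - 1}. moves v) = {1..L}"
    using moves_subset moves_cover by blast
  also have "card {1..L} = 2 * card {1..N - 1}"
    using n_ge_2 by simp
  finally have "(\<Sum>v\<in>{1..N - 1}. card (moves v)) = 2 * card {1..N - 1}" .
  moreover have "\<forall>v\<in>{1..N - 1}. 2 \<le> card (moves v)"
    using card_moves_ge_2 by simp
  ultimately show ?thesis
    using eq_of_sum_eq_card_mult[of "{1..N - 1}" 2 "\<lambda>v. card (moves v)" u] assms by simp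
qed

definition entry_step :: "int \<Rightarrow> nat" where
  "entry_step u = Min (moves u)"

definition exit_step :: "int \<Rightarrow> nat" where
  "exit_step u = Max (moves u)"

definition is_exit_step :: "nat \<Rightarrow> bool" where
  "is_exit_step j \<longleftrightarrow> j \<in> exit_step ` {1..N - 1}"

lemma
  assumes "u \<in> {1..N - 1}"
  shows moves_eq_entry_exit: "moves u = {entry_step u, exit_step u}"
    and entry_less_exit: "entry_step u < exit_step u"
proof -
  obtain i j where "i < j" "moves u = {i, j}"
    using card_moves[OF assms] by (auto simp: card_2_iff linorder_neq_iff)
  then show "moves u = {entry_step u, exit_step u}" "entry_step u < exit_step u"
    unfolding entry_step_def exit_step_def by auto
qed

lemma
  assumes "u \<in> {1..N - 1}"
  shows entry_step_range: "entry_step u \<in> {1..L}"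
    and exit_step_range: "exit_step u \<in> {1..L}"
  using moves_eq_entry_exit[OF assms] moves_subset[of u] by auto

lemma step_entry_add_step_exit:
  assumes "u \<in> {1..N - 1}"
  shows "step (entry_step u) + step (exit_step u) = N"
  using sum_step_moves[of u] moves_eq_entry_exit[OF assms] entry_less_exit[OF assms] assms
  by simp

lemma not_is_exit_step_entry_step:
  assumes "u \<in> {1..N - 1}"
  shows "\<not> is_exit_step (entry_step u)"
proof
  assume "is_exit_step (entry_step u)"
  then obtain v where v: "v \<in> {1..N - 1}" "entry_step u = exit_step v"
    unfolding is_exit_step_def by blast
  then have "v = u"
    using moved_class_unique[OF v(1) assms] moves_eq_entry_exit assms by (metis insertI1 insertI2)
  then show False using entry_less_exit[OF assms] v(2) by simp
qed

lemma step_cases: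
  assumes "j \<in> {1..L}"
  obtains (exit) u where "u \<in> {1..N - 1}" "j = exit_step u" "is_exit_step j"
  | (entry) u where "u \<in> {1..N - 1}" "j = entry_step u" "\<not> is_exit_step j"
proof -
  obtain u where u: "u \<in> {1..N - 1}" "j \<in> moves u" using moves_cover[OF assms] by blast
  then have "j = entry_step u \<or> j = exit_step u" using moves_eq_entry_exit by blast
  then show ?thesis
    using that u(1) not_is_exit_step_entry_step unfolding is_exit_step_def by blast
qed

lemma step_le:
  assumes "j \<in> {1..L}"
  shows "step j \<le> N - 1"
proof -
  obtain u where u: "u \<in> {1..N - 1}" "j \<in> moves u" using moves_cover[OF assms] by blast
  then have "j = entry_step u \<or> j = exit_step u" using moves_eq_entry_exit by blast
  moreover have "step (entry_step u) \<ge> 1" and "step (exit_step u) \<ge> 1"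
    using step_pos entry_step_range[OF u(1)] exit_step_range[OF u(1)] by auto
  ultimately show ?thesis using step_entry_add_step_exit[OF u(1)] by auto
qed

lemma suffix_class:
  assumes "u \<in> {1..N - 1}" and "i \<le> L"
  shows "suffix i u = u + (if i < entry_step u then N
                          else if i < exit_step u then step (exit_step u) else 0)"
proof -
  have "u mod N \<noteq> 0" using assms(1) by simp
  moreover have "{j \<in> moves u. i < j} =
      (if i < entry_step u then moves u else if i < exit_step u then {exit_step u} else {})"
    using moves_eq_entry_exit[OF assms(1)] entry_less_exit[OF assms(1)] by auto
  ultimately show ?thesis
    using suffix_eq_add_sum_step[OF _ assms(2)] sum_step_moves entry_less_exit[OF assms(1)] by simp
qed

lemma chain_exit_pred_mod:
  assumes "u \<in> {1..N - 1}"
  shows "c (exit_step u - 1) mod N = u"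
proof -
  have "exit_step u \<in> moves u" using moves_eq_entry_exit[OF assms] by blast
  moreover have "suffix (exit_step u) u = u"
    using suffix_class[OF assms, of "exit_step u"] exit_step_range[OF assms] entry_less_exit[OF assms]
    by simp
  ultimately show ?thesis using assms unfolding moves_def by simp
qed

lemma chain_entry_pred_mod:
  assumes "u \<in> {1..N - 1}"
  shows "c (entry_step u - 1) mod N = c (exit_step u) mod N"
proof -
  have "entry_step u \<in> moves u" using moves_eq_entry_exit[OF assms] by blast
  moreover have "suffix (entry_step u) u = u - c (exit_step u - 1) + c (exit_step u)"
    using suffix_class[OF assms, of "entry_step u"] entry_step_range[OF assms]
      entry_less_exit[OF assms] unfolding step_def by simp
  moreover have "u mod N = c (exit_step u - 1) mod N" using chain_exit_pred_mod[OF assms] assms by simp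
  ultimately show ?thesis unfolding moves_def using mod_diff_add_eq by simp
qed

lemma chain_entry_mod:
  assumes "u \<in> {1..N - 1}"
  shows "c (entry_step u) mod N = u"
proof -
  let ?i = "entry_step u"
  have i: "?i \<in> {1..L}" using entry_step_range[OF assms] .
  have "?i \<in> moves u" using moves_eq_entry_exit[OF assms] by blast
  then have "suffix ?i u mod N = c (?i - 1) mod N" unfolding moves_def by simp
  moreover have "suffix (?i - 1) u = suffix ?i u - c (?i - 1) + c ?i"
    using suffix_pred[OF i] \<open>?i \<in> moves u\<close> assms unfolding step_def by simp
  moreover have "suffix (?i - 1) u = u + N" using suffix_class[OF assms, of "?i - 1"] i by auto
  ultimately have "(u + N) mod N = c ?i mod N" using mod_diff_add_eq by metis
  then show ?thesis using assms by simp
qed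

lemma chain_mod_neq_after_exit:
  assumes "u \<in> {1..N - 1}" and "exit_step u < i" and "i \<le> L"
  shows "c (i - 1) mod N \<noteq> u"
proof -
  have "i \<notin> moves u" using moves_eq_entry_exit[OF assms(1)] entry_less_exit[OF assms(1)] assms(2)
    by auto
  moreover have "suffix i u = u" using suffix_class[OF assms(1,3)] entry_less_exit[OF assms(1)] assms(2)
    by simp
  ultimately show ?thesis using assms unfolding moves_def by auto
qed

lemma chain_mod_neq_between:
  assumes "u \<in> {1..N - 1}" and "entry_step u < i" and "i < exit_step u"
  shows "c (i - 1) mod N \<noteq> c (exit_step u) mod N"
proof -
  have "i \<le> L" using exit_step_range[OF assms(1)] assms(3) by simp
  have "i \<notin> moves u" using moves_eq_entry_exit[OF assms(1)] assms(2,3) by auto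
  then have "suffix i u mod N \<noteq> c (i - 1) mod N" unfolding moves_def using assms \<open>i \<le> L\<close> by auto
  moreover have "suffix i u = u - c (exit_step u - 1) + c (exit_step u)"
    using suffix_class[OF assms(1) \<open>i \<le> L\<close>] assms(2,3) unfolding step_def by simp
  moreover have "u mod N = c (exit_step u - 1) mod N" using chain_exit_pred_mod[OF assms(1)] assms by simp
  ultimately show ?thesis using mod_diff_add_eq by metis
qed

lemma chain_mod_neq_before_entry:
  assumes "u \<in> {1..N - 1}" and "1 \<le> i" and "i \<le> entry_step u"
  shows "c (i - 1) mod N \<noteq> u"
proof
  \<comment> \<open>Before its first move u is only shifted by lambda_n, so prefix (i - 1) fixes u,
    whereas it sends c (i - 1) to c 0, which is divisible by n.\<close>
  let ?j = "i - 1"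
  have j: "?j \<le> L" "?j < entry_step u" using entry_step_range[OF assms(1)] assms(2,3) by auto
  assume "c ?j mod N = u"
  then have "prefix ?j (c ?j) mod N = prefix ?j u mod N"
    using periodic_mod_cong[OF periodic_prefix] assms(1) by simp
  moreover have "prefix ?j (c ?j) = c 0" using prefix_chain j by simp
  moreover have "prefix ?j (u + N) = u + N"
    using prefix_suffix[of u ?j] suffix_class[OF assms(1) j(1)] j(2) assms(1) by simp
  then have "prefix ?j u = u"
    using periodic_prefix[of ?j] unfolding periodic_def by simp
  ultimately show False using chain_0_mod assms(1) by simp
qed

lemma departure_from_parent_le_entry:
  assumes "u \<in> {1..N - 1}" and "1 \<le> p" and "p \<le> exit_step u"
    and "c (p - 1) mod N = c (exit_step u) mod N"
  shows "p \<le> entry_step u"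
proof (rule ccontr)
  assume "\<not> p \<le> entry_step u"
  moreover have "p \<noteq> exit_step u"
    using chain_mod_neq[of "exit_step u"] exit_step_range[OF assms(1)] assms(4) by auto
  ultimately show False using chain_mod_neq_between[OF assms(1), of p] assms(3,4) by simp
qed

lemma is_exit_step_iff:
  assumes "q \<in> {1..L}"
  shows "is_exit_step q \<longleftrightarrow> c (q - 1) mod N \<noteq> 0 \<and> q = exit_step (c (q - 1) mod N)"
proof
  assume "is_exit_step q"
  then obtain u where "u \<in> {1..N - 1}" "q = exit_step u" unfolding is_exit_step_def by blast
  then show "c (q - 1) mod N \<noteq> 0 \<and> q = exit_step (c (q - 1) mod N)"
    using chain_exit_pred_mod by auto
next
  assume "c (q - 1) mod N \<noteq> 0 \<and> q = exit_step (c (q - 1) mod N)"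
  then show "is_exit_step q" using mod_N_mem_classes unfolding is_exit_step_def by auto
qed

lemma prefix_pred_chain:
  assumes j: "j \<in> {1..L}"
  shows "prefix (j - 1) (c j) = c j + (if is_exit_step j then N - step j else 0)"
proof -
  obtain u where u: "u \<in> {1..N - 1}" "j \<in> moves u" using moves_cover[OF j] by blast
  have suffix_pred_u: "suffix (j - 1) u = suffix j u - c (j - 1) + c j"
    using suffix_pred u j unfolding step_def by simp
  have "suffix j u mod N = c (j - 1) mod N" using u(2) unfolding moves_def by simp
  then have "suffix (j - 1) u mod N = c j mod N"
    unfolding suffix_pred_u by (rule mod_diff_add_eq)
  then have "prefix (j - 1) (suffix (j - 1) u) = prefix (j - 1) (c j) + (suffix (j - 1) u - c j)"
    using periodic_eq_add_diff[OF periodic_prefix] by blast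
  moreover have "prefix (j - 1) (suffix (j - 1) u) = u + N"
    using prefix_suffix u(1) by simp
  ultimately have pre: "prefix (j - 1) (c j) = u + N - suffix j u + c (j - 1)"
    using suffix_pred_u by simp
  from j show ?thesis
  proof (cases rule: step_cases)
    case (exit v)
    then have "v = u" using u moves_eq_entry_exit moved_class_unique by blast
    then have "suffix j u = u" using suffix_class[OF u(1)] j exit entry_less_exit[OF u(1)] by simp
    then show ?thesis using pre exit unfolding step_def by simp
  next
    case (entry v)
    then have "v = u" using u moves_eq_entry_exit moved_class_unique by blast
    then have "suffix j u = u + N - step j"
      using suffix_class[OF u(1)] j entry entry_less_exit[OF u(1)] step_entry_add_step_exit[OF u(1)]
      by simp
    then show ?thesis using pre entry unfolding step_def by simp
  qed
qed

lemma
  assumes j: "j \<in> {1..L}"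
  shows conj_refl_eq: "conj_refl rs j = aff_refl n 0 (prefix (j - 1) (c j) - c 0)"
    and conj_refl_mod_neq: "0 mod N \<noteq> (prefix (j - 1) (c j) - c 0) mod N"
proof -
  let ?fs = "take (j - 1) rs"
  have invol: "f \<circ> f = id" if "f \<in> set ?fs" for f
    using that by (meson involutive_rs in_set_takeD)
  have neq: "c (j - 1) mod N \<noteq> c j mod N" using chain_mod_neq j by simp
  have pc: "prefix (j - 1) (c (j - 1)) = c 0" by (rule prefix_chain) (use j in auto)
  have "conj_refl rs j = prefix (j - 1) \<circ> aff_refl n (c (j - 1)) (c j) \<circ> lprod (rev ?fs)"
    unfolding conj_refl_def prefix_def using nth_rs_chain[of j] j by simp
  also have "\<dots> = aff_refl n (prefix (j - 1) (c (j - 1))) (prefix (j - 1) (c j))"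
    using periodic_conj_aff_refl[OF periodic_prefix _ _ neq] lprod_comp_lprod_rev[OF invol]
      lprod_rev_comp_lprod[OF invol] unfolding prefix_def by blast
  also have "\<dots> = aff_refl n 0 (prefix (j - 1) (c j) - c 0)"
    using pc chain_0_mod by (intro aff_refl_translate) auto
  finally show "conj_refl rs j = aff_refl n 0 (prefix (j - 1) (c j) - c 0)" .
  have "prefix (j - 1) (c j) mod N \<noteq> prefix (j - 1) (c (j - 1)) mod N"
    using neq by (simp add: periodic_inj_mod_iff[OF periodic_prefix inj_prefix])
  moreover have "(prefix (j - 1) (c j) - c 0) mod N = prefix (j - 1) (c j) mod N"
    using chain_0_mod by (metis mod_diff_right_eq diff_zero)
  ultimately show "0 mod N \<noteq> (prefix (j - 1) (c j) - c 0) mod N"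
    using pc chain_0_mod by simp
qed

lemma conj_refl_at_0: "j \<in> {1..L} \<Longrightarrow> conj_refl rs j 0 = prefix (j - 1) (c j) - c 0"
  using conj_refl_eq aff_refl_left by simp

section \<open>Increasing conjugates and cyclicity\<close>

text \<open>An exit step followed by an entry step turns, at the parent class, from one subtree into the
  next.\<close>

definition wide_turns :: bool where
  "wide_turns \<longleftrightarrow>
     (\<forall>j\<in>{1..<L}. is_exit_step j \<longrightarrow> \<not> is_exit_step (Suc j) \<longrightarrow> N < step j + step (Suc j))"

definition increasing_departures :: bool where
  "increasing_departures \<longleftrightarrow>
     (\<forall>p q. 1 \<le> p \<longrightarrow> p < q \<longrightarrow> q \<le> L \<longrightarrow> c (p - 1) mod N = c (q - 1) mod N \<longrightarrow>
        \<not> is_exit_step q \<longrightarrow> step p < step q)"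

lemma conj_refl_increasing_iff_wide_turns:
  "(\<forall>j\<in>{1..<L}. conj_refl rs j 0 < conj_refl rs (j + 1) 0) \<longleftrightarrow> wide_turns"
proof -
  have "conj_refl rs j 0 < conj_refl rs (Suc j) 0 \<longleftrightarrow>
      (is_exit_step j \<longrightarrow> \<not> is_exit_step (Suc j) \<longrightarrow> N < step j + step (Suc j))"
    if j: "j \<in> {1..<L}" for j
  proof -
    have "j \<in> {1..L}" "Suc j \<in> {1..L}" using j by auto
    moreover have "c (Suc j) = c j + step (Suc j)" unfolding step_def by simp
    ultimately show ?thesis
      using conj_refl_at_0 prefix_pred_chain step_pos[of j] step_le[of j]
        step_pos[of "Suc j"] step_le[of "Suc j"] by auto
  qed
  then show ?thesis unfolding wide_turns_def by auto
qed

lemma wide_turns_if_increasing_departures: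
  assumes increasing_departures
  shows wide_turns
  unfolding wide_turns_def
proof (intro ballI impI)
  fix j assume j: "j \<in> {1..<L}" and "is_exit_step j" and "\<not> is_exit_step (Suc j)"
  then obtain u where u: "u \<in> {1..N - 1}" and j_exit: "j = exit_step u"
    unfolding is_exit_step_def by blast
  have "c (entry_step u - 1) mod N = c (Suc j - 1) mod N"
    using chain_entry_pred_mod[OF u] j_exit by simp
  moreover have "1 \<le> entry_step u" and "entry_step u < Suc j"
    using entry_step_range[OF u] entry_less_exit[OF u] j_exit by auto
  ultimately have "step (entry_step u) < step (Suc j)"
    using assms j \<open>\<not> is_exit_step (Suc j)\<close> unfolding increasing_departures_def by auto
  then show "N < step j + step (Suc j)" using step_entry_add_step_exit[OF u] j_exit by simp
qed

lemma increasing_departures_if_wide_turns: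
  assumes wide_turns
  shows increasing_departures
proof -
  have "step p < step q"
    if "1 \<le> p" "p < q" "q \<le> L" "c (p - 1) mod N = c (q - 1) mod N" "\<not> is_exit_step q" for p q
    using that
  proof (induction q arbitrary: p rule: less_induct)
    case (less q)
    define j where "j = q - 1"
    have j: "j \<in> {1..L}" "Suc j = q" "p \<le> j" using less.prems unfolding j_def by auto
    have p_class: "c (p - 1) mod N = c j mod N" using less.prems(4) unfolding j_def .
    from j(1) show ?case
    proof (cases rule: step_cases)
      case (exit u)
      have "N < step j + step q"
        using assms exit less.prems j unfolding wide_turns_def by auto
      then have entry_less_q: "step (entry_step u) < step q"
        using step_entry_add_step_exit[OF exit(1)] exit(2) by simp
      have "p \<le> entry_step u"
        using departure_from_parent_le_entry[OF exit(1) less.prems(1)] exit(2) j(3) p_class by simp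
      then consider "p = entry_step u" | "p < entry_step u" by fastforce
      then show ?thesis
      proof cases
        case 2
        have "entry_step u < q" using entry_less_exit[OF exit(1)] exit(2) j(2) by simp
        moreover have "c (entry_step u - 1) mod N = c (p - 1) mod N"
          using chain_entry_pred_mod[OF exit(1)] exit(2) p_class by simp
        moreover have "\<not> is_exit_step (entry_step u)" using not_is_exit_step_entry_step[OF exit(1)] .
        ultimately have "step p < step (entry_step u)"
          using less.IH less.prems(1) 2 entry_step_range[OF exit(1)] by auto
        then show ?thesis using entry_less_q by simp
      qed (use entry_less_q in simp)
    next
      case (entry u)
      then have "c j mod N = u" using chain_entry_mod by simp
      then show ?thesis
        using chain_mod_neq_before_entry[OF entry(1) less.prems(1)] entry(2) j(3) p_class by simp
    qed
  qed
  then show ?thesis unfolding increasing_departures_def by blast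
qed

lemma Nlist_chain:
  "Nlist n a b k = map (\<lambda>i. modn n (c i)) (filter (\<lambda>i. c (i - 1) mod N = k mod N) [1..<Suc L])"
proof -
  let ?steps = "filter (\<lambda>i. c (i - 1) mod N = k mod N) [1..<Suc L]"
  have upper: "2 * n - 1 = Suc L" using n_ge_2 by simp
  have steps: "filter (\<lambda>i. a (i - 1) mod N = k mod N) [1..<Suc L] = ?steps"
    by (rule filter_cong[OF refl]) (auto simp: chain_mod_a)
  have "map (\<lambda>i. modn n (b i)) ?steps = map (\<lambda>i. modn n (c i)) ?steps"
    by (rule map_cong[OF refl], rule modn_cong) (auto simp: chain_mod_b)
  then show ?thesis unfolding Nlist_def upper steps .
qed

lemma mod_modn_chain_diff:
  assumes "i \<in> {1..L}"
  shows "(modn n (c i) - c (i - 1)) mod N = step i"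
proof -
  have "(modn n (c i) - c (i - 1)) mod N = step i mod N"
    unfolding step_def using modn_mod by (metis mod_diff_left_eq)
  also have "\<dots> = step i" using step_pos[of i] step_le[of i] assms by simp
  finally show ?thesis .
qed

lemma modn_chain_eq_step:
  assumes "i \<in> {1..L}" and "c (i - 1) mod N = 0"
  shows "modn n (c i) = step i"
proof -
  have "modn n (c i) mod N = step i"
    using mod_modn_chain_diff[OF assms(1)] assms(2) by (metis mod_diff_right_eq diff_zero)
  moreover have "modn n (c i) \<in> {1..N}" using modn_range n_ge_2 by simp
  moreover have "1 \<le> step i" using step_pos assms(1) by simp
  ultimately show ?thesis by (cases "modn n (c i) = N") auto
qed

lemma sorted_Nlist_zero_iff:
  "sorted_wrt (<) (Nlist n a b N) \<longleftrightarrow>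
     (\<forall>p q. 1 \<le> p \<longrightarrow> p < q \<longrightarrow> q \<le> L \<longrightarrow> c (p - 1) mod N = 0 \<longrightarrow> c (q - 1) mod N = 0 \<longrightarrow>
        step p < step q)" (is "_ \<longleftrightarrow> ?rhs")
proof -
  let ?P = "\<lambda>i. c (i - 1) mod N = 0"
  have "sorted_wrt (<) (Nlist n a b N) \<longleftrightarrow>
      sorted_wrt (\<lambda>p q. modn n (c p) < modn n (c q)) (filter ?P [1..<Suc L])"
    unfolding Nlist_chain sorted_wrt_map by simp
  also have "\<dots> \<longleftrightarrow> sorted_wrt (\<lambda>p q. step p < step q) (filter ?P [1..<Suc L])"
    by (rule sorted_wrt_cong) (simp add: modn_chain_eq_step del: upt_Suc)
  also have "\<dots> \<longleftrightarrow> ?rhs"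
    unfolding sorted_wrt_filter_upt_iff by (auto simp: less_Suc_eq_le)
  finally show ?thesis .
qed

lemma departures_from_class:
  assumes "k \<in> {1..N - 1}"
  shows "filter (\<lambda>i. c (i - 1) mod N = k) [1..<Suc L] =
      filter (\<lambda>i. c (i - 1) mod N = k) [1..<exit_step k] @ [exit_step k]"
proof -
  have "[1..<Suc L] = [1..<exit_step k] @ exit_step k # [Suc (exit_step k)..<Suc L]"
    using exit_step_range[OF assms] upt_add_eq_append[of 1 "exit_step k" "Suc L - exit_step k"]
    by (simp add: upt_conv_Cons)
  moreover have "filter (\<lambda>i. c (i - 1) mod N = k) [Suc (exit_step k)..<Suc L] = []"
    unfolding filter_empty_conv
  proof
    fix i assume "i \<in> set [Suc (exit_step k)..<Suc L]"
    then show "c (i - 1) mod N \<noteq> k"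
      using chain_mod_neq_after_exit[OF assms, of i] by (simp del: upt_Suc)
  qed
  ultimately show ?thesis using chain_exit_pred_mod[OF assms] by simp
qed

lemma cyc_cond_Nlist_iff:
  assumes k: "k \<in> {1..N - 1}"
  shows "cyc_cond (Nlist n a b k) k \<longleftrightarrow>
     (\<forall>p q. 1 \<le> p \<longrightarrow> p < q \<longrightarrow> q < exit_step k \<longrightarrow> c (p - 1) mod N = k \<longrightarrow>
        c (q - 1) mod N = k \<longrightarrow> step p < step q)" (is "_ \<longleftrightarrow> ?rhs")
proof -
  let ?P = "\<lambda>i. c (i - 1) mod N = k"
  let ?ps = "filter ?P [1..<exit_step k]"
  let ?f = "\<lambda>i. modn n (c i)"
  have Nlist: "Nlist n a b k = map ?f ?ps @ [?f (exit_step k)]"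
    using Nlist_chain[of k] departures_from_class[OF k] k by simp
  have f: "?f i \<in> {1..N}" "?f i \<noteq> k" "(?f i - k) mod N = step i" if "i \<in> set ?ps" for i
  proof -
    have i: "i \<in> {1..L}" "c (i - 1) mod N = k" using that exit_step_range[OF k] by auto
    show "?f i \<in> {1..N}" using modn_range n_ge_2 by simp
    show "?f i \<noteq> k" using modn_mod[of n "c i"] chain_mod_neq[of i] i k by auto
    show "(?f i - k) mod N = step i"
      using mod_modn_chain_diff[OF i(1)] i(2) by (metis mod_diff_right_eq)
  qed
  have "cyc_cond (Nlist n a b k) k \<longleftrightarrow> sorted_wrt (cyclic_less k) (map ?f ?ps)"
    using f(2) by (subst cyc_cond_iff_sorted_cyclic_less) (auto simp: Nlist)
  also have "\<dots> \<longleftrightarrow> sorted_wrt (\<lambda>p q. step p < step q) ?ps"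
    unfolding sorted_wrt_map
  proof (rule sorted_wrt_cong)
    fix p q assume "p \<in> set ?ps" and "q \<in> set ?ps"
    then show "cyclic_less k (?f p) (?f q) \<longleftrightarrow> step p < step q"
      using mod_diff_less_iff_cyclic_less[of k N "?f p" "?f q"] f k by auto
  qed
  also have "\<dots> \<longleftrightarrow> ?rhs"
    unfolding sorted_wrt_filter_upt_iff ..
  finally show ?thesis .
qed

lemma not_is_exit_step_iff:
  assumes "q \<in> {1..L}"
  shows "\<not> is_exit_step q \<longleftrightarrow> c (q - 1) mod N = 0 \<or> q < exit_step (c (q - 1) mod N)"
proof (cases "c (q - 1) mod N = 0")
  case False
  then have "c (q - 1) mod N \<in> {1..N - 1}" by (rule mod_N_mem_classes)
  then have "q \<le> exit_step (c (q - 1) mod N)"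
    using chain_mod_neq_after_exit[of "c (q - 1) mod N" q] assms by fastforce
  then show ?thesis using is_exit_step_iff[OF assms] by auto
qed (use is_exit_step_iff[OF assms] in auto)

lemma increasing_departures_iff_classwise:
  "increasing_departures \<longleftrightarrow>
     (\<forall>p q. 1 \<le> p \<longrightarrow> p < q \<longrightarrow> q \<le> L \<longrightarrow> c (p - 1) mod N = 0 \<longrightarrow> c (q - 1) mod N = 0 \<longrightarrow>
        step p < step q) \<and>
     (\<forall>k\<in>{1..N - 1}. \<forall>p q. 1 \<le> p \<longrightarrow> p < q \<longrightarrow> q < exit_step k \<longrightarrow> c (p - 1) mod N = k \<longrightarrow>
        c (q - 1) mod N = k \<longrightarrow> step p < step q)"
  (is "_ \<longleftrightarrow> ?zero \<and> ?nonzero")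
proof
  assume inc: increasing_departures
  show "?zero \<and> ?nonzero"
  proof
    show ?zero using inc not_is_exit_step_iff unfolding increasing_departures_def by simp
    show ?nonzero
    proof (intro ballI allI impI)
      fix k p q assume k: "k \<in> {1..N - 1}"
        and pq: "1 \<le> p" "p < q" "q < exit_step k" "c (p - 1) mod N = k" "c (q - 1) mod N = k"
      then have "q \<in> {1..L}" using exit_step_range[OF k] by auto
      then show "step p < step q"
        using inc pq not_is_exit_step_iff unfolding increasing_departures_def by auto
    qed
  qed
next
  assume classwise: "?zero \<and> ?nonzero"
  show increasing_departures
    unfolding increasing_departures_def
  proof (intro allI impI)
    fix p q assume pq: "1 \<le> p" "p < q" "q \<le> L" "c (p - 1) mod N = c (q - 1) mod N"
      and "\<not> is_exit_step q"
    then have q_class: "c (q - 1) mod N = 0 \<or> q < exit_step (c (q - 1) mod N)"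
      using not_is_exit_step_iff[of q] by auto
    show "step p < step q"
    proof (cases "c (q - 1) mod N = 0")
      case False
      then show ?thesis using classwise pq q_class mod_N_mem_classes[OF False] by blast
    qed (use classwise pq in simp)
  qed
qed

lemma cyclic_repr_iff_increasing_departures: "cyclic_repr n a b \<longleftrightarrow> increasing_departures"
  unfolding cyclic_repr_def increasing_departures_iff_classwise sorted_Nlist_zero_iff
  using cyc_cond_Nlist_iff by auto

lemma cyclic_repr_iff_conj_refl_increasing:
  "cyclic_repr n a b \<longleftrightarrow> (\<forall>j\<in>{1..<L}. conj_refl rs j 0 < conj_refl rs (j + 1) 0)"
  using cyclic_repr_iff_increasing_departures conj_refl_increasing_iff_wide_turns
    wide_turns_if_increasing_departures increasing_departures_if_wide_turns by blast

lemma conj_refl_is_reflection_at_0: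
  assumes "j \<in> {1..L}"
  shows "0 mod N \<noteq> conj_refl rs j 0 mod N \<and> conj_refl rs j = aff_refl n 0 (conj_refl rs j 0)"
  using conj_refl_eq[OF assms] conj_refl_at_0[OF assms] conj_refl_mod_neq[OF assms] by simp

end

theorem proposition4p4:
  fixes n :: nat and rs :: "(int \<Rightarrow> int) list"
  assumes "n \<ge> 2" and "rs \<in> fact_lambda n" and "tree_like n rs"
  shows "(\<forall>j\<in>{1..2*n-2}. 0 mod int n \<noteq> conj_refl rs j 0 mod int n \<and>
            conj_refl rs j = aff_refl n 0 (conj_refl rs j 0))
         \<and> (cyclic n rs \<longleftrightarrow>
              (\<forall>j\<in>{1..<2*n-2}. conj_refl rs j 0 < conj_refl rs (j + 1) 0))"
proof -
  have factorization: "tree_like_factorization n rs a b" if "tree_like_repr n rs a b" for a b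
    using assms(1,2) that unfolding fact_lambda_def by unfold_locales auto
  obtain a b where repr: "tree_like_repr n rs a b"
    using assms(3) unfolding tree_like_def by blast
  interpret tree_like_factorization n rs a b using factorization[OF repr] .
  \<comment> \<open>Cyclicity asks for some writing of rs, but whether a writing is cyclic does not depend
    on the writing.\<close>
  have "cyclic n rs \<longleftrightarrow> (\<forall>j\<in>{1..<2*n-2}. conj_refl rs j 0 < conj_refl rs (j + 1) 0)"
    unfolding cyclic_iff_cyclic_repr
    using repr factorization tree_like_factorization.cyclic_repr_iff_conj_refl_increasing by blast
  then show ?thesis using conj_refl_is_reflection_at_0 by blast
qed

end
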